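(* In the group \(\mathcal{G}\) described below, there exists \(\sigma\in\mathcal{N}\) such that \(t_{14}t_6t_3t_{11}=\sigma\, t_5t_3t_8t_{14}\).
   Context: Let \(\mathcal{G}=\langle x,y,t \mid x^7, y^2, (xy)^3, [x,y]^4, t^2, [t^{x^2},yx^{-1}], [t,y], (yt^{x^2})^5, (xyx^2t^x)^5, (xt)^8\rangle\), with \(a^g=g^{-1}ag\), \([a,b]=a^{-1}b^{-1}ab\). Let \(\mathcal{N}=\langle x,y\rangle\le\mathcal{G}\); it acts on \(\{1,\dots,14\}\) on the right via \(x\mapsto(1,2,3,4,5,6,7)(8,9,10,11,12,13,14)\), \(y\mapsto(1,12)(2,3)(4,11)(5,8)(6,13)(9,10)\). Put \(t_7=t\) and \(t_i=t^g\) for any \(g\in\mathcal{N}\) mapping \(7\) to \(i\) (well defined since the stabilizer of 7 centralizes \(t\)). *)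

theory Defs
  imports Main
begin

text \<open>Elements are represented by words over the generators and their inverses;
  equality in G is the congruence generated by free cancellation and the relators.\<close>

datatype gen = X | Y | T

type_synonym word = "(gen \<times> bool) list"  (* (g, True) stands for g^-1 *)

definition ltr :: "gen \<Rightarrow> word" where "ltr g = [(g, False)]"

definition winv :: "word \<Rightarrow> word" where
  "winv w = rev (map (\<lambda>(g, b). (g, \<not> b)) w)"

definition wpow :: "word \<Rightarrow> nat \<Rightarrow> word" where
  "wpow w n = concat (replicate n w)"

definition wcomm :: "word \<Rightarrow> word \<Rightarrow> word" where
  "wcomm a b = winv a @ winv b @ a @ b"

definition wconj :: "word \<Rightarrow> word \<Rightarrow> word" where
  "wconj a g = winv g @ a @ g"

definition relators :: "word set" where
  "relators = {
     wpow (ltr X) 7,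
     wpow (ltr Y) 2,
     wpow (ltr X @ ltr Y) 3,
     wpow (wcomm (ltr X) (ltr Y)) 4,
     wpow (ltr T) 2,
     wcomm (wconj (ltr T) (wpow (ltr X) 2)) (ltr Y @ winv (ltr X)),
     wcomm (ltr T) (ltr Y),
     wpow (ltr Y @ wconj (ltr T) (wpow (ltr X) 2)) 5,
     wpow (ltr X @ ltr Y @ wpow (ltr X) 2 @ wconj (ltr T) (ltr X)) 5,
     wpow (ltr X @ ltr T) 8 }"

inductive geq :: "word \<Rightarrow> word \<Rightarrow> bool" where
  geq_refl: "geq u u"
| geq_sym: "geq u v \<Longrightarrow> geq v u"
| geq_trans: "geq u v \<Longrightarrow> geq v w \<Longrightarrow> geq u w"
| geq_cancel: "geq [(g, b), (g, \<not> b)] []"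
| geq_rel: "r \<in> relators \<Longrightarrow> geq r []"
| geq_app: "geq u v \<Longrightarrow> geq u' v' \<Longrightarrow> geq (u @ u') (v @ v')"

text \<open>Action of N = <x,y> on {1..14} (on the right).\<close>
definition xperm :: "nat \<Rightarrow> nat" where
  "xperm i = (if 1 \<le> i \<and> i < 7 then i + 1 else if i = 7 then 1
              else if 8 \<le> i \<and> i < 14 then i + 1 else if i = 14 then 8 else i)"

definition xinvperm :: "nat \<Rightarrow> nat" where
  "xinvperm i = (if 1 < i \<and> i \<le> 7 then i - 1 else if i = 1 then 7
              else if 8 < i \<and> i \<le> 14 then i - 1 else if i = 8 then 14 else i)"

definition yperm :: "nat \<Rightarrow> nat" where
  "yperm i = (if i = 1 then 12 else if i = 12 then 1
         else if i = 2 then 3 else if i = 3 then 2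
         else if i = 4 then 11 else if i = 11 then 4
         else if i = 5 then 8 else if i = 8 then 5
         else if i = 6 then 13 else if i = 13 then 6
         else if i = 9 then 10 else if i = 10 then 9 else i)"

fun letter_perm :: "gen \<times> bool \<Rightarrow> nat \<Rightarrow> nat" where
  "letter_perm (X, False) i = xperm i"
| "letter_perm (X, True) i = xinvperm i"
| "letter_perm (Y, _) i = yperm i"
| "letter_perm (T, _) i = i"

definition act :: "nat \<Rightarrow> word \<Rightarrow> nat" where
  "act p w = foldl (\<lambda>q l. letter_perm l q) p w"

definition inN :: "word \<Rightarrow> bool" where
  "inN w \<longleftrightarrow> (\<forall>l \<in> set w. fst l \<in> {X, Y})"

definition tw :: "nat \<Rightarrow> word" where
  "tw i = wconj (ltr T) (SOME g. inN g \<and> act 7 g = i)"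

end

theory Submission
  imports Defs
begin

text \<open>The point stabilizer of 7 in \<open>N\<close> centralizes \<open>t\<close>. It suffices to check this on its Schreier
  generators with respect to the transversal \<open>coset_rep\<close>. A relator of \<open>N\<close> read around the Schreier
  graph from any point, or one of the stabilizer elements \<open>y\<close> and \<open>x^2 y x^-3\<close> (which commute with
  \<open>t\<close> by the relators \<open>[t, y]\<close> and \<open>[t^(x^2), y x^-1]\<close>) read from 7, is a product of Schreier
  generators commuting with \<open>t\<close>; so once all factors but one are known to commute with \<open>t\<close>, so
  does the last. Two sweeps of this rule, starting from the edges of the spanning tree, reach all
  56 Schreier generators.

  Consequently \<open>t_j = t^(coset_rep j)\<close> satisfies \<open>t^g = t_(7g)\<close> and \<open>t_j n = n t_(jn)\<close> for \<open>n \<in> N\<close>.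
  The relators \<open>(y t^(x^2))^5\<close>, \<open>(x y x^2 t^x)^5\<close> and \<open>(x t)^8\<close> then say that
  \<open>t_2 t_3 t_2 t_3 t_2\<close>, \<open>t_1 t_12 t_8 t_5 t_1\<close> and \<open>t_7 t_6 t_5 t_4 t_3 t_2 t_1 t_7\<close> lie in \<open>N\<close>.
  Their conjugates under \<open>N\<close> serve as rewriting rules modulo left multiplication by \<open>N\<close>, and 25
  rewriting steps lead from \<open>t_14 t_6 t_3 t_11\<close> to \<open>t_5 t_3 t_8 t_14\<close>.\<close>

abbreviation "xL \<equiv> (X, False)"
abbreviation "xI \<equiv> (X, True)"
abbreviation "yL \<equiv> (Y, False)"
abbreviation "yI \<equiv> (Y, True)"
abbreviation "tL \<equiv> (T, False)"

abbreviation points :: "nat set" where "points \<equiv> {1..14}"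

declare geq_trans[trans]

section \<open>Words modulo the relations of \<open>G\<close>\<close>

lemma geq_append_left: "geq u v \<Longrightarrow> geq (a @ u) (a @ v)"
  by (rule geq_app[OF geq_refl])

lemma geq_append_right: "geq u v \<Longrightarrow> geq (u @ b) (v @ b)"
  by (rule geq_app[OF _ geq_refl])

lemma geq_append_mid: "geq u v \<Longrightarrow> geq (a @ u @ b) (a @ v @ b)"
  by (intro geq_append_left geq_append_right)

lemma winv_Nil [simp]: "winv [] = []"
  by (simp add: winv_def)

lemma winv_append [simp]: "winv (a @ b) = winv b @ winv a"
  by (simp add: winv_def)

lemma winv_Cons: "winv ((g, b) # w) = winv w @ [(g, \<not> b)]"
  by (simp add: winv_def)

lemma winv_winv [simp]: "winv (winv w) = w"
  by (induction w) (auto simp: winv_def)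

lemma geq_winv_right: "geq (w @ winv w) []"
proof (induction w)
  case Nil
  show ?case by (simp add: geq_refl)
next
  case (Cons a w)
  obtain g b where a: "a = (g, b)" by (cases a)
  have "a # w @ winv (a # w) = [(g, b)] @ (w @ winv w) @ [(g, \<not> b)]"
    by (simp add: a winv_Cons)
  also have "geq \<dots> ([(g, b)] @ [] @ [(g, \<not> b)])"
    by (rule geq_append_mid[OF Cons.IH])
  also have "geq ([(g, b)] @ [] @ [(g, \<not> b)]) []"
    using geq_cancel by simp
  finally show ?case by simp
qed

lemma geq_winv_left: "geq (winv w @ w) []"
  using geq_winv_right[of "winv w"] by simp

lemma geq_swap_of_wcomm: assumes "geq (wcomm a b) []" shows "geq (b @ a) (a @ b)"
proof -
  have "b @ a = (b @ a) @ []" by simp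
  also have "geq \<dots> ((b @ a) @ wcomm a b)"
    by (rule geq_append_left[OF geq_sym[OF assms]])
  also have "\<dots> = b @ (a @ winv a) @ (winv b @ a @ b)"
    by (simp add: wcomm_def)
  also have "geq \<dots> (b @ [] @ (winv b @ a @ b))"
    by (rule geq_append_mid[OF geq_winv_right])
  also have "\<dots> = (b @ winv b) @ (a @ b)" by simp
  also have "geq \<dots> ([] @ (a @ b))"
    by (rule geq_append_right[OF geq_winv_right])
  finally show ?thesis by simp
qed

definition commutes_t :: "word \<Rightarrow> bool" where
  "commutes_t s \<longleftrightarrow> geq (s @ [tL]) ([tL] @ s)"

lemma commutes_t_geq: assumes "geq a b" "commutes_t a" shows "commutes_t b"
proof -
  have "geq (b @ [tL]) (a @ [tL])"
    by (rule geq_append_right[OF geq_sym[OF assms(1)]])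
  also have "geq \<dots> ([tL] @ a)"
    using assms(2) by (simp add: commutes_t_def)
  also have "geq \<dots> ([tL] @ b)"
    by (rule geq_append_left[OF assms(1)])
  finally show ?thesis by (simp add: commutes_t_def)
qed

lemma commutes_t_trivial: assumes "geq a []" shows "commutes_t a"
proof (rule commutes_t_geq[OF geq_sym[OF assms]])
  show "commutes_t []" by (simp add: commutes_t_def geq_refl)
qed

lemma commutes_t_append: assumes "commutes_t a" "commutes_t b" shows "commutes_t (a @ b)"
proof -
  have "geq (a @ (b @ [tL])) (a @ ([tL] @ b))"
    using assms(2) unfolding commutes_t_def by (rule geq_append_left)
  also have "a @ ([tL] @ b) = (a @ [tL]) @ b" by simp
  also have "geq \<dots> (([tL] @ a) @ b)"
    using assms(1) unfolding commutes_t_def by (rule geq_append_right)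
  finally show ?thesis unfolding commutes_t_def by simp
qed

lemma commutes_t_winv: assumes "commutes_t a" shows "commutes_t (winv a)"
proof -
  have "winv a @ [tL] = (winv a @ [tL]) @ []" by simp
  also have "geq \<dots> ((winv a @ [tL]) @ (a @ winv a))"
    by (rule geq_append_left[OF geq_sym[OF geq_winv_right]])
  also have "\<dots> = winv a @ ([tL] @ a) @ winv a" by simp
  also have "geq \<dots> (winv a @ (a @ [tL]) @ winv a)"
    using assms unfolding commutes_t_def by (rule geq_append_mid[OF geq_sym])
  also have "\<dots> = (winv a @ a) @ [tL] @ winv a" by simp
  also have "geq \<dots> ([] @ [tL] @ winv a)"
    by (rule geq_append_right[OF geq_winv_left])
  finally show ?thesis unfolding commutes_t_def by simp
qed

lemma commutes_t_concat: "\<forall>a \<in> set as. commutes_t a \<Longrightarrow> commutes_t (concat as)"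
  by (induction as) (simp_all add: commutes_t_append commutes_t_trivial geq_refl)

lemma commutes_t_middle:
  assumes "commutes_t a" "commutes_t b" "commutes_t (a @ e @ b)"
  shows "commutes_t e"
proof -
  have "winv a @ (a @ e @ b) @ winv b = (winv a @ a) @ e @ (b @ winv b)" by simp
  also have "geq \<dots> ([] @ e @ [])"
    by (rule geq_app[OF geq_winv_left geq_append_left[OF geq_winv_right]])
  finally have "geq (winv a @ (a @ e @ b) @ winv b) e" by simp
  then show ?thesis
    by (rule commutes_t_geq) (intro commutes_t_append commutes_t_winv assms)
qed

lemma commutes_t_conj:
  assumes "geq (b @ wconj [tL] g) (wconj [tL] g @ b)"
  shows "commutes_t (g @ b @ winv g)"
proof -
  have "(g @ b @ winv g) @ [tL] = (g @ b @ winv g @ [tL]) @ []" by simp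
  also have "geq \<dots> ((g @ b @ winv g @ [tL]) @ (g @ winv g))"
    by (rule geq_append_left[OF geq_sym[OF geq_winv_right]])
  also have "\<dots> = g @ (b @ wconj [tL] g) @ winv g" by (simp add: wconj_def)
  also have "geq \<dots> (g @ (wconj [tL] g @ b) @ winv g)"
    by (rule geq_append_mid[OF assms])
  also have "\<dots> = (g @ winv g) @ ([tL] @ g @ b @ winv g)" by (simp add: wconj_def)
  also have "geq \<dots> ([] @ ([tL] @ g @ b @ winv g))"
    by (rule geq_append_right[OF geq_winv_right])
  finally show ?thesis unfolding commutes_t_def by simp
qed

lemma wconj_t_geq_of_commutes_t:
  assumes "commutes_t (a @ winv b)"
  shows "geq (wconj [tL] a) (wconj [tL] b)"
proof -
  have "wconj [tL] a = (winv a @ [tL] @ a) @ []" by (simp add: wconj_def)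
  also have "geq \<dots> ((winv a @ [tL] @ a) @ (winv b @ b))"
    by (rule geq_append_left[OF geq_sym[OF geq_winv_left]])
  also have "\<dots> = winv a @ ([tL] @ (a @ winv b)) @ b" by simp
  also have "geq \<dots> (winv a @ ((a @ winv b) @ [tL]) @ b)"
    using assms unfolding commutes_t_def by (rule geq_append_mid[OF geq_sym])
  also have "\<dots> = (winv a @ a) @ winv b @ [tL] @ b" by simp
  also have "geq \<dots> ([] @ winv b @ [tL] @ b)"
    by (rule geq_append_right[OF geq_winv_left])
  finally show ?thesis by (simp add: wconj_def)
qed

lemma act_Nil [simp]: "act j [] = j"
  by (simp add: act_def)

lemma act_Cons [simp]: "act j (l # w) = act (letter_perm l j) w"
  by (simp add: act_def)

lemma act_append [simp]: "act j (u @ w) = act (act j u) w"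
  by (simp add: act_def)

lemma inN_Nil [simp]: "inN []"
  by (simp add: inN_def)

lemma inN_Cons [simp]: "inN (l # w) \<longleftrightarrow> fst l \<in> {X, Y} \<and> inN w"
  by (simp add: inN_def)

lemma inN_append [simp]: "inN (a @ b) \<longleftrightarrow> inN a \<and> inN b"
  by (auto simp: inN_def)

lemma inN_winv [simp]: "inN (winv w) \<longleftrightarrow> inN w"
  by (auto simp: inN_def winv_def)

lemma wpow_0 [simp]: "wpow w 0 = []"
  by (simp add: wpow_def)

lemma wpow_Suc [simp]: "wpow w (Suc k) = w @ wpow w k"
  by (simp add: wpow_def)

lemma wpow_numeral [simp]: "wpow w (numeral n) = w @ wpow w (pred_numeral n)"
  by (simp add: numeral_eq_Suc)

lemma inN_wpow: "inN w \<Longrightarrow> inN (wpow w k)"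
  by (induction k) simp_all

lemma perm_values [simp]:
  "xperm 1 = 2" "xperm 2 = 3" "xperm 3 = 4" "xperm 4 = 5" "xperm 5 = 6" "xperm 6 = 7" "xperm 7 = 1"
  "xperm 8 = 9" "xperm 9 = 10" "xperm 10 = 11" "xperm 11 = 12" "xperm 12 = 13" "xperm 13 = 14"
  "xperm 14 = 8"
  "xinvperm 1 = 7" "xinvperm 2 = 1" "xinvperm 3 = 2" "xinvperm 4 = 3" "xinvperm 5 = 4"
  "xinvperm 6 = 5" "xinvperm 7 = 6" "xinvperm 8 = 14" "xinvperm 9 = 8" "xinvperm 10 = 9"
  "xinvperm 11 = 10" "xinvperm 12 = 11" "xinvperm 13 = 12" "xinvperm 14 = 13"
  "yperm 1 = 12" "yperm 2 = 3" "yperm 3 = 2" "yperm 4 = 11" "yperm 5 = 8" "yperm 6 = 13"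
  "yperm 7 = 7" "yperm 8 = 5" "yperm 9 = 10" "yperm 10 = 9" "yperm 11 = 4" "yperm 12 = 1"
  "yperm 13 = 6" "yperm 14 = 14"
  "xperm (Suc 0) = 2" "xinvperm (Suc 0) = 7" "yperm (Suc 0) = 12"
  by (simp_all add: xperm_def xinvperm_def yperm_def)

lemma letter_perm_points: "j \<in> points \<Longrightarrow> letter_perm (g, b) j \<in> points"
  by (cases g; cases b) (auto simp: xperm_def xinvperm_def yperm_def)

lemma act_points: "j \<in> points \<Longrightarrow> act j w \<in> points"
proof (induction w arbitrary: j)
  case (Cons l w)
  have "letter_perm l j \<in> points"
    using letter_perm_points[OF Cons.prems, of "fst l" "snd l"] by simp
  then show ?case by (simp only: act_Cons Cons.IH)
qed simp

section \<open>The stabilizer of 7 centralizes \<open>t\<close>\<close>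

text \<open>Index 0 is unused.\<close>

definition coset_rep :: "nat \<Rightarrow> word" where
  "coset_rep j = [[], [xL], [xL, xL], [xL, xL, xL], [xL, yL, xI, yL], [xI, xI], [xI], [],
     [xL, yL, xI, xI, yL, xI], [xL, yL, xI, xI, yL], [xL, yL, xI, xI], [xL, yL, xI],
     [xL, yL], [xL, yL, xL], [xL, yL, xL, xL]] ! j"

lemma coset_rep_7 [simp]: "coset_rep 7 = []"
  by (simp add: coset_rep_def)

lemma coset_rep_maps_7: assumes "j \<in> points" shows "inN (coset_rep j) \<and> act 7 (coset_rep j) = j"
proof -
  have "list_all (\<lambda>j. inN (coset_rep j) \<and> act 7 (coset_rep j) = j) [1..<15]"
    by code_simp
  moreover have "j \<in> set [1..<15]" using assms by auto
  ultimately show ?thesis by (simp add: list_all_iff)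
qed

type_synonym edge = "nat \<times> gen \<times> bool"

definition schreier_gen :: "edge \<Rightarrow> word" where
  "schreier_gen e = coset_rep (fst e) @ [snd e] @ winv (coset_rep (letter_perm (snd e) (fst e)))"

fun schreier_path :: "nat \<Rightarrow> word \<Rightarrow> edge list" where
  "schreier_path j [] = []"
| "schreier_path j (l # w) = (j, l) # schreier_path (letter_perm l j) w"

lemma geq_concat_schreier_path:
  "geq (concat (map schreier_gen (schreier_path j w))) (coset_rep j @ w @ winv (coset_rep (act j w)))"
proof (induction w arbitrary: j)
  case Nil
  show ?case using geq_sym[OF geq_winv_right[of "coset_rep j"]] by simp
next
  case (Cons l w)
  let ?j = "letter_perm l j"
  have "concat (map schreier_gen (schreier_path j (l # w)))
      = (coset_rep j @ [l] @ winv (coset_rep ?j)) @ concat (map schreier_gen (schreier_path ?j w))"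
    by (simp add: schreier_gen_def)
  also have "geq \<dots> ((coset_rep j @ [l] @ winv (coset_rep ?j)) @ (coset_rep ?j @ w @ winv (coset_rep (act ?j w))))"
    by (rule geq_append_left[OF Cons.IH])
  also have "\<dots> = (coset_rep j @ [l]) @ (winv (coset_rep ?j) @ coset_rep ?j) @ (w @ winv (coset_rep (act ?j w)))"
    by simp
  also have "geq \<dots> ((coset_rep j @ [l]) @ [] @ (w @ winv (coset_rep (act ?j w))))"
    by (rule geq_append_mid[OF geq_winv_left])
  finally show ?case by simp
qed

lemma commutes_t_forced_schreier_gen:
  assumes loop: "commutes_t (coset_rep j @ w @ winv (coset_rep j))" "act j w = j"
    and known: "\<forall>e \<in> set K. commutes_t (schreier_gen e)"
    and forced: "filter (\<lambda>e. e \<notin> set K) (schreier_path j w) = [e]"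
  shows "commutes_t (schreier_gen e)"
proof -
  obtain us vs where path: "schreier_path j w = us @ e # vs"
    and us: "\<forall>u \<in> set us. u \<in> set K" and "filter (\<lambda>e. e \<notin> set K) vs = []"
    using forced by (auto simp: filter_eq_Cons_iff)
  then have vs: "\<forall>v \<in> set vs. v \<in> set K" by (simp add: filter_empty_conv)
  have "commutes_t (concat (map schreier_gen (schreier_path j w)))"
    using commutes_t_geq[OF geq_sym[OF geq_concat_schreier_path]] loop by simp
  then have "commutes_t (concat (map schreier_gen us) @ schreier_gen e @ concat (map schreier_gen vs))"
    by (simp add: path)
  moreover have "commutes_t (concat (map schreier_gen us))" "commutes_t (concat (map schreier_gen vs))"
    using known us vs by (auto intro!: commutes_t_concat)
  ultimately show ?thesis by (rule commutes_t_middle[rotated 2])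
qed

lemma commutes_t_conj_relator:
  assumes "geq w []"
  shows "commutes_t (coset_rep j @ w @ winv (coset_rep j))"
proof (rule commutes_t_trivial)
  have "geq (coset_rep j @ w @ winv (coset_rep j)) (coset_rep j @ [] @ winv (coset_rep j))"
    by (rule geq_append_mid[OF assms])
  also have "geq \<dots> []"
    using geq_winv_right[of "coset_rep j"] by simp
  finally show "geq (coset_rep j @ w @ winv (coset_rep j)) []" .
qed

lemma commutes_t_y: "commutes_t [yL]"
proof -
  have "geq (wcomm [tL] [yL]) []"
    by (rule geq_rel) (simp add: relators_def ltr_def)
  then show ?thesis unfolding commutes_t_def by (rule geq_swap_of_wcomm)
qed

lemma commutes_t_x2_y_x3inv: "commutes_t [xL, xL, yL, xI, xI, xI]"
proof -
  have "geq (wcomm (wconj [tL] [xL, xL]) [yL, xI]) []"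
    by (rule geq_rel) (simp add: relators_def wcomm_def wconj_def ltr_def winv_def)
  then have "geq ([yL, xI] @ wconj [tL] [xL, xL]) (wconj [tL] [xL, xL] @ [yL, xI])"
    by (rule geq_swap_of_wcomm)
  then have "commutes_t ([xL, xL] @ [yL, xI] @ winv [xL, xL])"
    by (rule commutes_t_conj)
  then show ?thesis by (simp add: winv_def)
qed

definition loops_at :: "nat \<Rightarrow> word list" where
  "loops_at j =
     [wpow (ltr X) 7, wpow (ltr Y) 2, wpow (ltr X @ ltr Y) 3, wpow (wcomm (ltr X) (ltr Y)) 4,
      [xL, xI], [xI, xL], [yL, yI], [yI, yL]]
     @ (if j = 7 then [[yL], [xL, xL, yL, xI, xI, xI]] else [])"

lemma commutes_t_loops_at:
  assumes "w \<in> set (loops_at j)"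
  shows "commutes_t (coset_rep j @ w @ winv (coset_rep j))"
proof -
  have cancel: "geq [(g, b), (g, \<not> b)] []" for g b
    by (rule geq_cancel)
  from assms consider "w \<in> relators" | "w \<in> {[xL, xI], [xI, xL], [yL, yI], [yI, yL]}"
    | "j = 7" "w \<in> {[yL], [xL, xL, yL, xI, xI, xI]}"
    by (auto simp: loops_at_def relators_def split: if_splits)
  then show ?thesis
  proof cases
    case 1
    then show ?thesis by (intro commutes_t_conj_relator geq_rel)
  next
    case 2
    then show ?thesis using cancel[of X False] cancel[of X True] cancel[of Y False] cancel[of Y True]
      by (auto intro: commutes_t_conj_relator)
  next
    case 3
    then show ?thesis using commutes_t_y commutes_t_x2_y_x3inv by auto
  qed
qed

fun add_forced_edge :: "edge list \<Rightarrow> nat \<times> word \<Rightarrow> edge list" where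
  "add_forced_edge K (j, w) =
     (let new = filter (\<lambda>e. e \<notin> set K) (schreier_path j w)
      in if act j w = j \<and> length new = 1 then hd new # K else K)"

definition sweep :: "edge list \<Rightarrow> edge list" where
  "sweep K = foldl add_forced_edge K [(j, w). j \<leftarrow> [1..<15], w \<leftarrow> loops_at j]"

definition tree_edges :: "edge list" where
  "tree_edges =
     [(j, l). j \<leftarrow> [1..<15], l \<leftarrow> [xL, xI, yL, yI], coset_rep (letter_perm l j) = coset_rep j @ [l]]"

lemma commutes_t_add_forced_edge:
  assumes "\<forall>e \<in> set K. commutes_t (schreier_gen e)" "w \<in> set (loops_at j)"
  shows "\<forall>e \<in> set (add_forced_edge K (j, w)). commutes_t (schreier_gen e)"
proof (cases "act j w = j \<and> length (filter (\<lambda>e. e \<notin> set K) (schreier_path j w)) = 1")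
  case True
  then obtain e where "filter (\<lambda>e. e \<notin> set K) (schreier_path j w) = [e]"
    by (auto simp: length_Suc_conv)
  then show ?thesis
    using True assms(1) commutes_t_forced_schreier_gen[OF commutes_t_loops_at[OF assms(2)] _ assms(1)]
    by (simp add: Let_def)
next
  case False
  then show ?thesis using assms(1) by (auto simp: Let_def)
qed

lemma commutes_t_foldl_add_forced_edge:
  assumes "\<forall>e \<in> set K. commutes_t (schreier_gen e)" "\<forall>(j, w) \<in> set jws. w \<in> set (loops_at j)"
  shows "\<forall>e \<in> set (foldl add_forced_edge K jws). commutes_t (schreier_gen e)"
  using assms
proof (induction jws arbitrary: K)
  case (Cons jw jws)
  obtain j w where jw: "jw = (j, w)" by (cases jw)
  have "\<forall>e \<in> set (add_forced_edge K (j, w)). commutes_t (schreier_gen e)"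
    using Cons.prems commutes_t_add_forced_edge[of K w j] by (simp add: jw)
  then show ?case
    using Cons.IH Cons.prems(2) by (simp add: jw)
qed simp

lemma commutes_t_sweep:
  "\<forall>e \<in> set K. commutes_t (schreier_gen e) \<Longrightarrow> \<forall>e \<in> set (sweep K). commutes_t (schreier_gen e)"
  unfolding sweep_def by (rule commutes_t_foldl_add_forced_edge) auto

lemma commutes_t_tree_edges: "\<forall>e \<in> set tree_edges. commutes_t (schreier_gen e)"
proof
  fix e assume "e \<in> set tree_edges"
  then have "coset_rep (letter_perm (snd e) (fst e)) = coset_rep (fst e) @ [snd e]"
    by (auto simp: tree_edges_def)
  then have "schreier_gen e = (coset_rep (fst e) @ [snd e]) @ winv (coset_rep (fst e) @ [snd e])"
    by (simp add: schreier_gen_def del: winv_append)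
  then show "commutes_t (schreier_gen e)"
    by (simp only: commutes_t_trivial geq_winv_right)
qed

lemma sweep_tree_edges_complete:
  "list_all (\<lambda>j. list_all (\<lambda>l. (j, l) \<in> set (sweep (sweep tree_edges))) [xL, xI, yL, yI]) [1..<15]"
  by code_simp

lemma commutes_t_schreier_gen:
  assumes "j \<in> points" "fst l \<in> {X, Y}"
  shows "commutes_t (schreier_gen (j, l))"
proof -
  obtain g b where l: "l = (g, b)" by (cases l)
  have "j \<in> set [1..<15]" using assms(1) by auto
  then have "list_all (\<lambda>l. (j, l) \<in> set (sweep (sweep tree_edges))) [xL, xI, yL, yI]"
    using sweep_tree_edges_complete unfolding list_all_iff by blast
  then have "(j, l) \<in> set (sweep (sweep tree_edges))"
    using assms(2) by (cases g; cases b) (simp_all add: l)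
  then show ?thesis
    using commutes_t_sweep[OF commutes_t_sweep[OF commutes_t_tree_edges]] by blast
qed

theorem wconj_t_coset_rep: "inN g \<Longrightarrow> geq (wconj [tL] g) (wconj [tL] (coset_rep (act 7 g)))"
proof (induction g rule: rev_induct)
  case Nil
  show ?case by (simp add: geq_refl)
next
  case (snoc l g)
  have g: "inN g" and l: "fst l \<in> {X, Y}" using snoc.prems by auto
  define j where "j = act 7 g"
  have j: "j \<in> points" unfolding j_def by (rule act_points) simp
  have "wconj [tL] (g @ [l]) = winv [l] @ wconj [tL] g @ [l]" by (simp add: wconj_def)
  also have "geq \<dots> (winv [l] @ wconj [tL] (coset_rep j) @ [l])"
    unfolding j_def by (rule geq_append_mid[OF snoc.IH[OF g]])
  also have "\<dots> = wconj [tL] (coset_rep j @ [l])" by (simp add: wconj_def)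
  also have "geq \<dots> (wconj [tL] (coset_rep (letter_perm l j)))"
    using commutes_t_schreier_gen[OF j l]
    by (intro wconj_t_geq_of_commutes_t) (simp add: schreier_gen_def)
  finally show ?case by (simp add: j_def)
qed

section \<open>Relations among the conjugates of \<open>t\<close>\<close>

definition t_at :: "nat \<Rightarrow> word" where
  "t_at j = wconj [tL] (coset_rep j)"

lemma tw_geq_t_at: assumes "j \<in> points" shows "geq (tw j) (t_at j)"
proof -
  let ?g = "SOME g. inN g \<and> act 7 g = j"
  have "inN ?g \<and> act 7 ?g = j"
    using coset_rep_maps_7[OF assms] by (rule someI)
  then show ?thesis
    using wconj_t_coset_rep[of ?g] by (simp add: tw_def t_at_def ltr_def)
qed

lemma t_at_mult_N: assumes "inN n" "j \<in> points" shows "geq (t_at j @ n) (n @ t_at (act j n))"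
proof -
  have "geq (wconj [tL] (coset_rep j @ n)) (t_at (act j n))"
    using wconj_t_coset_rep[of "coset_rep j @ n"] coset_rep_maps_7[OF assms(2)] assms(1)
    by (simp add: t_at_def)
  then have "geq (n @ wconj [tL] (coset_rep j @ n)) (n @ t_at (act j n))"
    by (rule geq_append_left)
  have "t_at j @ n = [] @ t_at j @ n" by simp
  also have "geq \<dots> ((n @ winv n) @ t_at j @ n)"
    by (rule geq_append_right[OF geq_sym[OF geq_winv_right]])
  also have "\<dots> = n @ wconj [tL] (coset_rep j @ n)"
    by (simp add: wconj_def t_at_def)
  also have "geq \<dots> (n @ t_at (act j n))" by fact
  finally show ?thesis .
qed

lemma t_at_t_at: "geq (t_at j @ t_at j) []"
proof -
  have "t_at j @ t_at j = (winv (coset_rep j) @ [tL]) @ (coset_rep j @ winv (coset_rep j)) @ ([tL] @ coset_rep j)"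
    by (simp add: t_at_def wconj_def)
  also have "geq \<dots> ((winv (coset_rep j) @ [tL]) @ [] @ ([tL] @ coset_rep j))"
    by (rule geq_append_mid[OF geq_winv_right])
  also have "\<dots> = winv (coset_rep j) @ wpow (ltr T) 2 @ coset_rep j"
    by (simp add: ltr_def)
  also have "geq \<dots> (winv (coset_rep j) @ [] @ coset_rep j)"
    by (rule geq_append_mid[OF geq_rel]) (simp add: relators_def)
  also have "geq \<dots> []"
    using geq_winv_left[of "coset_rep j"] by simp
  finally show ?thesis .
qed

definition t_prod :: "nat list \<Rightarrow> word" where
  "t_prod js = concat (map t_at js)"

lemma t_prod_Nil [simp]: "t_prod [] = []"
  by (simp add: t_prod_def)

lemma t_prod_Cons [simp]: "t_prod (j # js) = t_at j @ t_prod js"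
  by (simp add: t_prod_def)

lemma t_prod_append [simp]: "t_prod (is @ js) = t_prod is @ t_prod js"
  by (simp add: t_prod_def)

lemma t_prod_mult_N:
  "set js \<subseteq> points \<Longrightarrow> inN n \<Longrightarrow> geq (t_prod js @ n) (n @ t_prod (map (\<lambda>j. act j n) js))"
proof (induction js)
  case Nil
  show ?case by (simp add: geq_refl)
next
  case (Cons j js)
  have "t_prod (j # js) @ n = t_at j @ (t_prod js @ n)" by simp
  also have "geq \<dots> (t_at j @ (n @ t_prod (map (\<lambda>j. act j n) js)))"
    using Cons by (intro geq_append_left) simp
  also have "\<dots> = (t_at j @ n) @ t_prod (map (\<lambda>j. act j n) js)" by simp
  also have "geq \<dots> ((n @ t_at (act j n)) @ t_prod (map (\<lambda>j. act j n) js))"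
    using Cons.prems by (intro geq_append_right t_at_mult_N) simp_all
  finally show ?case by simp
qed

lemma t_prod_rev: "geq (t_prod js @ t_prod (rev js)) []"
proof (induction js)
  case Nil
  show ?case by (simp add: geq_refl)
next
  case (Cons j js)
  have "t_prod (j # js) @ t_prod (rev (j # js)) = t_at j @ (t_prod js @ t_prod (rev js)) @ t_at j"
    by simp
  also have "geq \<dots> (t_at j @ [] @ t_at j)"
    by (rule geq_append_mid[OF Cons.IH])
  also have "geq \<dots> []"
    using t_at_t_at[of j] by simp
  finally show ?case .
qed

lemma t_prod_conj:
  assumes "geq (t_prod js) m" "inN g" "set js \<subseteq> points"
  shows "geq (t_prod (map (\<lambda>j. act j g) js)) (winv g @ m @ g)"
proof -
  have "t_prod (map (\<lambda>j. act j g) js) = [] @ t_prod (map (\<lambda>j. act j g) js)" by simp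
  also have "geq \<dots> ((winv g @ g) @ t_prod (map (\<lambda>j. act j g) js))"
    by (rule geq_append_right[OF geq_sym[OF geq_winv_left]])
  also have "\<dots> = winv g @ (g @ t_prod (map (\<lambda>j. act j g) js))" by simp
  also have "geq \<dots> (winv g @ (t_prod js @ g))"
    by (rule geq_append_left[OF geq_sym[OF t_prod_mult_N[OF assms(3,2)]]])
  also have "geq \<dots> (winv g @ (m @ g))"
    by (rule geq_append_left[OF geq_append_right[OF assms(1)]])
  finally show ?thesis .
qed

text \<open>Moving the factors \<open>n\<close> of \<open>(n t_a)^k\<close> to the left gives \<open>n^k t_(a n^(k-1)) \<cdots> t_(a n) t_a\<close>.\<close>

lemma t_prod_of_power_relator:
  assumes "inN n" "a \<in> points" "geq (wpow (n @ t_at a) k) []"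
  shows "geq (t_prod (rev (map (\<lambda>i. act a (wpow n i)) [0..<k]))) (winv (wpow n k))"
proof -
  let ?ts = "\<lambda>k. t_prod (rev (map (\<lambda>i. act a (wpow n i)) [0..<k]))"
  have collect: "geq (wpow (n @ t_at a) k) (wpow n k @ ?ts k)" for k
  proof (induction k)
    case 0
    show ?case by (simp add: geq_refl)
  next
    case (Suc k)
    have "wpow (n @ t_at a) (Suc k) = (n @ t_at a) @ wpow (n @ t_at a) k"
      by simp
    also have "geq \<dots> ((n @ t_at a) @ (wpow n k @ ?ts k))"
      by (rule geq_append_left[OF Suc.IH])
    also have "\<dots> = n @ (t_at a @ wpow n k) @ ?ts k" by simp
    also have "geq \<dots> (n @ (wpow n k @ t_at (act a (wpow n k))) @ ?ts k)"
      using assms(1,2) by (intro geq_append_mid t_at_mult_N inN_wpow)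
    also have "\<dots> = wpow n (Suc k) @ ?ts (Suc k)"
      by simp
    finally show ?case .
  qed
  have "?ts k = [] @ ?ts k" by simp
  also have "geq \<dots> ((winv (wpow n k) @ wpow n k) @ ?ts k)"
    by (rule geq_append_right[OF geq_sym[OF geq_winv_left]])
  also have "\<dots> = winv (wpow n k) @ (wpow n k @ ?ts k)" by simp
  also have "geq \<dots> (winv (wpow n k) @ [])"
    using geq_trans[OF geq_sym[OF collect] assms(3)] by (rule geq_append_left)
  finally show ?thesis by simp
qed

lemma t_relation_y:
  assumes "inN g"
  shows "geq (t_prod (map (\<lambda>j. act j g) [2, 3, 2, 3, 2])) (winv g @ winv (wpow [yL] 5) @ g)"
proof (rule t_prod_conj[OF _ assms])
  have "geq (wpow ([yL] @ t_at 2) 5) []"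
    by (rule geq_rel) (simp add: relators_def t_at_def coset_rep_def ltr_def)
  from t_prod_of_power_relator[OF _ _ this]
  show "geq (t_prod [2, 3, 2, 3, 2]) (winv (wpow [yL] 5))"
    by (simp add: upt_rec)
qed simp

lemma t_relation_xyxx:
  assumes "inN g"
  shows "geq (t_prod (map (\<lambda>j. act j g) [1, 12, 8, 5, 1])) (winv g @ winv (wpow [xL, yL, xL, xL] 5) @ g)"
proof (rule t_prod_conj[OF _ assms])
  have "geq (wpow ([xL, yL, xL, xL] @ t_at 1) 5) []"
    by (rule geq_rel) (simp add: relators_def t_at_def coset_rep_def ltr_def wconj_def)
  from t_prod_of_power_relator[OF _ _ this]
  show "geq (t_prod [1, 12, 8, 5, 1]) (winv (wpow [xL, yL, xL, xL] 5))"
    by (simp add: upt_rec)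
qed simp

lemma t_relation_x:
  assumes "inN g"
  shows "geq (t_prod (map (\<lambda>j. act j g) [7, 6, 5, 4, 3, 2, 1, 7])) (winv g @ winv (wpow [xL] 8) @ g)"
proof (rule t_prod_conj[OF _ assms])
  have "geq (wpow ([xL] @ t_at 7) 8) []"
    by (rule geq_rel) (simp add: relators_def t_at_def ltr_def wconj_def)
  from t_prod_of_power_relator[OF _ _ this]
  show "geq (t_prod [7, 6, 5, 4, 3, 2, 1, 7]) (winv (wpow [xL] 8))"
    by (simp add: upt_rec)
qed simp

section \<open>Rewriting products of the \<open>t_j\<close> modulo \<open>N\<close>\<close>

definition same_N_coset :: "nat list \<Rightarrow> nat list \<Rightarrow> bool" where
  "same_N_coset U V \<longleftrightarrow> (\<exists>n. inN n \<and> geq (t_prod U) (n @ t_prod V))"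

lemma same_N_coset_trans [trans]:
  assumes "same_N_coset U V" "same_N_coset V W"
  shows "same_N_coset U W"
proof -
  obtain n n' where n: "inN n" "geq (t_prod U) (n @ t_prod V)"
    and n': "inN n'" "geq (t_prod V) (n' @ t_prod W)"
    using assms unfolding same_N_coset_def by blast
  have "geq (t_prod U) ((n @ n') @ t_prod W)"
    using geq_trans[OF n(2) geq_append_left[OF n'(2)]] by simp
  then show ?thesis
    unfolding same_N_coset_def using n(1) n'(1) by (intro exI[of _ "n @ n'"]) simp
qed

text \<open>A relation \<open>t_R = m\<close> with \<open>R = s r\<close> gives \<open>t_s = m t_(rev r)\<close>; applied to the segment of
  \<open>W\<close> starting at index \<open>i\<close>, its factor \<open>m\<close> is moved past the \<open>i\<close> letters in front of it.\<close>

lemma same_N_coset_rewrite: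
  assumes rel: "geq (t_prod R) m" "inN m" and W: "set W \<subseteq> points"
    and segment: "take k (drop i W) = take k R"
    and W': "W' = map (\<lambda>j. act j m) (take i W) @ rev (drop k R) @ drop (i + k) W"
  shows "same_N_coset W W'"
proof -
  let ?A = "take i W" and ?s = "take k R" and ?r = "drop k R" and ?B = "drop (i + k) W"
  have W_split: "W = ?A @ ?s @ ?B"
    using segment by (metis append_take_drop_id drop_drop add.commute)
  have "t_prod ?s = t_prod ?s @ []" by simp
  also have "geq \<dots> (t_prod ?s @ (t_prod ?r @ t_prod (rev ?r)))"
    by (rule geq_append_left[OF geq_sym[OF t_prod_rev]])
  also have "\<dots> = t_prod R @ t_prod (rev ?r)"
    by (metis append_assoc append_take_drop_id t_prod_append)
  also have "geq \<dots> (m @ t_prod (rev ?r))"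
    by (rule geq_append_right[OF rel(1)])
  finally have s: "geq (t_prod ?s) (m @ t_prod (rev ?r))" .
  have A: "set ?A \<subseteq> points"
    using W by (meson set_take_subset subset_trans)
  have "t_prod W = t_prod ?A @ t_prod ?s @ t_prod ?B"
    by (subst W_split) simp
  also have "geq \<dots> (t_prod ?A @ (m @ t_prod (rev ?r)) @ t_prod ?B)"
    by (rule geq_append_mid[OF s])
  also have "\<dots> = (t_prod ?A @ m) @ t_prod (rev ?r) @ t_prod ?B" by simp
  also have "geq \<dots> ((m @ t_prod (map (\<lambda>j. act j m) ?A)) @ t_prod (rev ?r) @ t_prod ?B)"
    by (rule geq_append_right[OF t_prod_mult_N[OF A rel(2)]])
  also have "\<dots> = m @ t_prod W'"
    by (simp add: W')
  finally show ?thesis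
    unfolding same_N_coset_def using rel(2) by blast
qed

lemma same_N_coset_first_half: "same_N_coset [14, 6, 3, 11] [14, 6, 8, 9, 1, 9, 12]"
proof -
  note winv_Cons [simp]
  have "same_N_coset [14, 6, 3, 11] [14, 9, 8, 5]"
    by (rule same_N_coset_rewrite[OF t_relation_x[of "[xL, xL, yL, xL, xL, xL, yL, xL]"], where i = 0 and k = 4])
      simp_all
  also have "same_N_coset ... [14, 2, 14, 2, 9, 8, 5]"
    by (rule same_N_coset_rewrite[OF t_relation_y[of "[yL, xI, xI, yL, xL, xL]"], where i = 0 and k = 1])
      simp_all
  also have "same_N_coset ... [4, 1, 4, 1, 9, 8, 9, 5]"
    by (rule same_N_coset_rewrite[OF t_relation_y[of "[xL, yL, xL, xL, xL, yL, xL]"], where i = 4 and k = 2])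
      simp_all
  also have "same_N_coset ... [12, 9, 12, 1, 2, 9, 5]"
    by (rule same_N_coset_rewrite[OF t_relation_xyxx[of "[yL, xI, xI, xI, yL, xL, xL, yL]"], where i = 3 and k = 3])
      simp_all
  also have "same_N_coset ... [2, 5, 2, 8, 12, 9, 5, 9]"
    by (rule same_N_coset_rewrite[OF t_relation_y[of "[xL, xL, xL, yL, xL, xL, yL]"], where i = 5 and k = 2])
      simp_all
  also have "same_N_coset ... [12, 2, 12, 7, 12, 2, 9]"
    by (rule same_N_coset_rewrite[OF t_relation_xyxx[of "[yL, xI, xI, yL, xL, xL, xL]"], where i = 4 and k = 3])
      simp_all
  also have "same_N_coset ... [12, 9, 5, 12, 7, 12, 2, 9]"
    by (rule same_N_coset_rewrite[OF t_relation_xyxx[of "[xL, yL, xL, xL, xL, yL, xI]"], where i = 0 and k = 2])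
      simp_all
  also have "same_N_coset ... [7, 13, 14, 12, 7, 2, 9]"
    by (rule same_N_coset_rewrite[OF t_relation_y[of "[yL, xI, xI, yL]"], where i = 3 and k = 3])
      simp_all
  also have "same_N_coset ... [5, 3, 14, 5, 2, 9]"
    by (rule same_N_coset_rewrite[OF t_relation_xyxx[of "[xL, xL, xL, yL, xL, xL, xL, yL]"], where i = 2 and k = 3])
      simp_all
  also have "same_N_coset ... [2, 6, 3, 5, 9, 12, 9]"
    by (rule same_N_coset_rewrite[OF t_relation_xyxx[of "[xI, yL, xI, xI]"], where i = 3 and k = 2])
      simp_all
  also have "same_N_coset ... [7, 13, 3, 12, 10, 9, 12, 9]"
    by (rule same_N_coset_rewrite[OF t_relation_xyxx[of "[xL, yL, xI, xI, xI, yL, xL, xL, xL]"], where i = 2 and k = 2])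
      simp_all
  also have "same_N_coset ... [14, 6, 8, 9, 1, 9, 12]"
    by (rule same_N_coset_rewrite[OF t_relation_y[of "[xI, yL, xI, xI, yL]"], where i = 5 and k = 3])
      simp_all
  finally show ?thesis .
qed

lemma same_N_coset_second_half: "same_N_coset [14, 6, 8, 9, 1, 9, 12] [5, 3, 8, 14]"
proof -
  note winv_Cons [simp]
  have "same_N_coset [14, 6, 8, 9, 1, 9, 12] [7, 6, 2, 9, 1, 12]"
    by (rule same_N_coset_rewrite[OF t_relation_y[of "[xL, yL, xI, xI, xI, yL, xL, xL, xL]"], where i = 3 and k = 3])
      simp_all
  also have "same_N_coset ... [14, 10, 6, 13, 1, 5, 8]"
    by (rule same_N_coset_rewrite[OF t_relation_xyxx[of "[]"], where i = 4 and k = 2])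
      simp_all
  also have "same_N_coset ... [10, 14, 8, 13, 1, 13, 5, 8]"
    by (rule same_N_coset_rewrite[OF t_relation_y[of "[yL, xI, xI, yL, xL]"], where i = 3 and k = 2])
      simp_all
  also have "same_N_coset ... [12, 4, 8, 6, 13, 5, 8]"
    by (rule same_N_coset_rewrite[OF t_relation_xyxx[of "[yL, xI, xI, xI, yL, xI, xI]"], where i = 2 and k = 3])
      simp_all
  also have "same_N_coset ... [6, 11, 1, 12, 13, 5, 13, 8]"
    by (rule same_N_coset_rewrite[OF t_relation_y[of "[xL, yL, xI, xI, xI, yL]"], where i = 4 and k = 2])
      simp_all
  also have "same_N_coset ... [12, 2, 7, 12, 6, 13, 8]"
    by (rule same_N_coset_rewrite[OF t_relation_xyxx[of "[xI, yL, xI, xI, xI, yL, xL]"], where i = 3 and k = 3])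
      simp_all
  also have "same_N_coset ... [12, 2, 12, 7, 12, 6, 13, 8]"
    by (rule same_N_coset_rewrite[OF t_relation_y[of "[xI, yL, xI, xI, xI, yL, xL, xL]"], where i = 0 and k = 2])
      simp_all
  also have "same_N_coset ... [7, 6, 12, 7, 6, 13, 8]"
    by (rule same_N_coset_rewrite[OF t_relation_y[of "[yL, xI, xI, yL]"], where i = 2 and k = 3])
      simp_all
  also have "same_N_coset ... [4, 6, 5, 13, 7, 6, 13, 8]"
    by (rule same_N_coset_rewrite[OF t_relation_xyxx[of "[yL, xL, xL, xL, yL, xL]"], where i = 1 and k = 2])
      simp_all
  also have "same_N_coset ... [11, 14, 1, 13, 14, 13, 8]"
    by (rule same_N_coset_rewrite[OF t_relation_xyxx[of "[xL, xL, xL, yL, xL, xL]"], where i = 3 and k = 3])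
      simp_all
  also have "same_N_coset ... [9, 14, 1, 14, 13, 14, 13, 8]"
    by (rule same_N_coset_rewrite[OF t_relation_y[of "[xI, xI, xI, yL, xL]"], where i = 1 and k = 2])
      simp_all
  also have "same_N_coset ... [5, 13, 8, 14, 8]"
    by (rule same_N_coset_rewrite[OF t_relation_y[of "[xL, yL, xL, xL, xL, yL, xI]"], where i = 3 and k = 4])
      simp_all
  also have "same_N_coset ... [5, 3, 8, 14]"
    by (rule same_N_coset_rewrite[OF t_relation_y[of "[xL, yL, xL, xL, xL, yL]"], where i = 2 and k = 3])
      simp_all
  finally show ?thesis .
qed

lemma geq_concat_tw: "set js \<subseteq> points \<Longrightarrow> geq (concat (map tw js)) (t_prod js)"
proof (induction js)
  case Nil
  show ?case by (simp add: geq_refl)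
next
  case (Cons j js)
  then show ?case by (simp add: geq_app tw_geq_t_at)
qed

theorem lemma3p7:
  shows "\<exists>\<sigma>. inN \<sigma> \<and> geq (tw 14 @ tw 6 @ tw 3 @ tw 11) (\<sigma> @ tw 5 @ tw 3 @ tw 8 @ tw 14)"
proof -
  obtain n where n: "inN n" "geq (t_prod [14, 6, 3, 11]) (n @ t_prod [5, 3, 8, 14])"
    using same_N_coset_trans[OF same_N_coset_first_half same_N_coset_second_half]
    unfolding same_N_coset_def by blast
  have "geq (tw 14 @ tw 6 @ tw 3 @ tw 11) (t_prod [14, 6, 3, 11])"
    using geq_concat_tw[of "[14, 6, 3, 11]"] by simp
  also have "geq \<dots> (n @ t_prod [5, 3, 8, 14])" by (rule n(2))
  also have "geq \<dots> (n @ tw 5 @ tw 3 @ tw 8 @ tw 14)"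
    using geq_append_left[OF geq_sym[OF geq_concat_tw[of "[5, 3, 8, 14]"]]] by simp
  finally show ?thesis using n(1) by blast
qed

end
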